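(* There exist a transient MDP with a sink state and a risk level $\beta>0$ such that $g^\star_\infty(\beta)=-\infty$.
   Context: MDP: states $\bar{\mathcal S}=\{1,\dots,S,S+1\}$, $e:=S+1$ a sink state, $\mathcal S=\{1,\dots,S\}$; finite actions; transitions $p(s,a,s')$, real rewards $r(s,a,s')$; $p(e,a,e)=1$, $r(e,a,e)=0$; initial distribution $\mu$ on $\mathcal S$ with $\mu>0$. Transient: for every stationary deterministic policy $\pi$, $\sum_{t\ge0}\mathbb P^{\pi,s}[\tilde s_t=s']<\infty$ for all $s,s'\in\mathcal S$. $\mathrm{ERM}_\beta[\tilde x]=-\beta^{-1}\log\mathbb E e^{-\beta\tilde x}$. $g_t(\pi,\beta)=\mathrm{ERM}^{\pi,\mu}_\beta[\sum_{k=0}^t r(\tilde s_k,\tilde a_k,\tilde s_{k+1})]$, $g^\star_t(\beta)=\sup_{\pi}g_t(\pi,\beta)$ over history-dependent randomized policies, and $g^\star_\infty(\beta)=\liminf_{t\to\infty}g^\star_t(\beta)$. *)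

theory Defs
  imports "HOL-Analysis.Analysis" "HOL-Library.Liminf_Limsup"
begin

text \<open>States are 1..S+1, with sink state e = S+1; actions are 0..<A.
  Transitions p s a s', rewards r s a s', initial distribution mu.\<close>

definition states_bar :: "nat \<Rightarrow> nat set" where
  "states_bar S = {1..S+1}"

definition states :: "nat \<Rightarrow> nat set" where
  "states S = {1..S}"

definition actions :: "nat \<Rightarrow> nat set" where
  "actions A = {0..<A}"

definition is_mdp ::
  "nat \<Rightarrow> nat \<Rightarrow> (nat \<Rightarrow> nat \<Rightarrow> nat \<Rightarrow> real) \<Rightarrow> (nat \<Rightarrow> nat \<Rightarrow> nat \<Rightarrow> real)
   \<Rightarrow> (nat \<Rightarrow> real) \<Rightarrow> bool" where
  "is_mdp S A p r \<mu> \<longleftrightarrow>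
     A \<ge> 1 \<and>
     (\<forall>s\<in>states_bar S. \<forall>a\<in>actions A.
        (\<forall>s'\<in>states_bar S. p s a s' \<ge> 0) \<and> (\<Sum>s'\<in>states_bar S. p s a s') = 1) \<and>
     (\<forall>a\<in>actions A. p (S+1) a (S+1) = 1 \<and> r (S+1) a (S+1) = 0) \<and>
     (\<forall>s\<in>states S. \<mu> s > 0) \<and> (\<Sum>s\<in>states S. \<mu> s) = 1"

fun occ :: "nat \<Rightarrow> (nat \<Rightarrow> nat \<Rightarrow> nat \<Rightarrow> real) \<Rightarrow> (nat \<Rightarrow> nat) \<Rightarrow> nat \<Rightarrow> nat \<Rightarrow> nat \<Rightarrow> real" where
  "occ S p d s 0 s' = (if s' = s then 1 else 0)"
| "occ S p d s (Suc n) s' = (\<Sum>s''\<in>states_bar S. occ S p d s n s'' * p s'' (d s'') s')"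

definition transient :: "nat \<Rightarrow> nat \<Rightarrow> (nat \<Rightarrow> nat \<Rightarrow> nat \<Rightarrow> real) \<Rightarrow> bool" where
  "transient S A p \<longleftrightarrow>
     (\<forall>d. (\<forall>s\<in>states_bar S. d s \<in> actions A) \<longrightarrow>
        (\<forall>s\<in>states S. \<forall>s'\<in>states S. summable (\<lambda>n. occ S p d s n s')))"

text \<open>History-dependent randomized policies: pi ss as a is the probability of
  choosing action a given the state history ss (s_0..s_k) and action history as (a_0..a_{k-1}).\<close>
definition valid_policy :: "nat \<Rightarrow> (nat list \<Rightarrow> nat list \<Rightarrow> nat \<Rightarrow> real) \<Rightarrow> bool" where
  "valid_policy A \<pi> \<longleftrightarrow>
     (\<forall>ss as. (\<forall>a\<in>actions A. \<pi> ss as a \<ge> 0) \<and> (\<Sum>a\<in>actions A. \<pi> ss as a) = 1)"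

definition traj_prob ::
  "(nat \<Rightarrow> nat \<Rightarrow> nat \<Rightarrow> real) \<Rightarrow> (nat \<Rightarrow> real) \<Rightarrow> (nat list \<Rightarrow> nat list \<Rightarrow> nat \<Rightarrow> real)
   \<Rightarrow> nat \<Rightarrow> nat list \<Rightarrow> nat list \<Rightarrow> real" where
  "traj_prob p \<mu> \<pi> t ss as =
     \<mu> (ss ! 0) * (\<Prod>k\<le>t. \<pi> (take (Suc k) ss) (take k as) (as ! k) * p (ss ! k) (as ! k) (ss ! Suc k))"

definition traj_return :: "(nat \<Rightarrow> nat \<Rightarrow> nat \<Rightarrow> real) \<Rightarrow> nat \<Rightarrow> nat list \<Rightarrow> nat list \<Rightarrow> real" where
  "traj_return r t ss as = (\<Sum>k\<le>t. r (ss ! k) (as ! k) (ss ! Suc k))"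

definition state_seqs :: "nat \<Rightarrow> nat \<Rightarrow> nat list set" where
  "state_seqs S t = {ss. length ss = t + 2 \<and> set ss \<subseteq> states_bar S}"

definition action_seqs :: "nat \<Rightarrow> nat \<Rightarrow> nat list set" where
  "action_seqs A t = {as. length as = t + 1 \<and> set as \<subseteq> actions A}"

definition g_t ::
  "nat \<Rightarrow> nat \<Rightarrow> (nat \<Rightarrow> nat \<Rightarrow> nat \<Rightarrow> real) \<Rightarrow> (nat \<Rightarrow> nat \<Rightarrow> nat \<Rightarrow> real) \<Rightarrow> (nat \<Rightarrow> real)
   \<Rightarrow> nat \<Rightarrow> (nat list \<Rightarrow> nat list \<Rightarrow> nat \<Rightarrow> real) \<Rightarrow> real \<Rightarrow> real" where
  "g_t S A p r \<mu> t \<pi> \<beta> =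
     - (1 / \<beta>) * ln (\<Sum>ss\<in>state_seqs S t. \<Sum>as\<in>action_seqs A t.
          traj_prob p \<mu> \<pi> t ss as * exp (- \<beta> * traj_return r t ss as))"

definition g_star_t ::
  "nat \<Rightarrow> nat \<Rightarrow> (nat \<Rightarrow> nat \<Rightarrow> nat \<Rightarrow> real) \<Rightarrow> (nat \<Rightarrow> nat \<Rightarrow> nat \<Rightarrow> real) \<Rightarrow> (nat \<Rightarrow> real)
   \<Rightarrow> nat \<Rightarrow> real \<Rightarrow> ereal" where
  "g_star_t S A p r \<mu> t \<beta> = (SUP \<pi>\<in>{\<pi>. valid_policy A \<pi>}. ereal (g_t S A p r \<mu> t \<pi> \<beta>))"

definition g_star_inf ::
  "nat \<Rightarrow> nat \<Rightarrow> (nat \<Rightarrow> nat \<Rightarrow> nat \<Rightarrow> real) \<Rightarrow> (nat \<Rightarrow> nat \<Rightarrow> nat \<Rightarrow> real) \<Rightarrow> (nat \<Rightarrow> real)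
   \<Rightarrow> real \<Rightarrow> ereal" where
  "g_star_inf S A p r \<mu> \<beta> = liminf (\<lambda>t. g_star_t S A p r \<mu> t \<beta>)"

end

theory Submission
  imports Defs
begin

text \<open>Take one transient state that returns to itself with probability 1/2, each time
  paying reward \<open>-(1 + ln 2)\<close>, and otherwise falls into the sink for free. The
  trajectory that stays in the transient state until time \<open>t\<close> has probability
  \<open>2^-(t+1)\<close> and return \<open>-(t+1)(1 + ln 2)\<close>. For \<open>\<beta> = 1\<close> this single trajectory
  contributes \<open>e^(t+1)\<close> to \<open>E exp(-R)\<close>, so \<open>g_t \<le> -(t+1)\<close> for every policy, while
  the chain is transient because the occupancy of the transient state decays like
  \<open>2^-n\<close>.\<close>

lemma finite_state_seqs: "finite (state_seqs S t)"
proof (rule finite_subset)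
  show "state_seqs S t \<subseteq> {xs. set xs \<subseteq> states_bar S \<and> length xs = t + 2}"
    by (auto simp: state_seqs_def)
  show "finite {xs. set xs \<subseteq> states_bar S \<and> length xs = t + 2}"
    by (intro finite_lists_length_eq) (simp add: states_bar_def)
qed

lemma finite_action_seqs: "finite (action_seqs A t)"
proof (rule finite_subset)
  show "action_seqs A t \<subseteq> {xs. set xs \<subseteq> actions A \<and> length xs = t + 1}"
    by (auto simp: action_seqs_def)
  show "finite {xs. set xs \<subseteq> actions A \<and> length xs = t + 1}"
    by (intro finite_lists_length_eq) (simp add: actions_def)
qed

lemma traj_prob_nonneg:
  assumes "valid_policy A \<pi>"
    and "\<forall>s\<in>states_bar S. \<mu> s \<ge> 0"
    and "\<forall>s\<in>states_bar S. \<forall>a\<in>actions A. \<forall>s'\<in>states_bar S. p s a s' \<ge> 0"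
    and "ss \<in> state_seqs S t" and "as \<in> action_seqs A t"
  shows "traj_prob p \<mu> \<pi> t ss as \<ge> 0"
proof -
  have ss: "ss ! k \<in> states_bar S" if "k \<le> t + 1" for k
    using assms(4) that by (auto simp: state_seqs_def)
  have as: "as ! k \<in> actions A" if "k \<le> t" for k
    using assms(5) that by (auto simp: action_seqs_def)
  have "(\<Prod>k\<le>t. \<pi> (take (Suc k) ss) (take k as) (as ! k) * p (ss ! k) (as ! k) (ss ! Suc k)) \<ge> 0"
    using assms(1,3) ss as by (intro prod_nonneg) (simp add: valid_policy_def)
  moreover have "\<mu> (ss ! 0) \<ge> 0"
    using assms(2) ss by simp
  ultimately show ?thesis
    unfolding traj_prob_def by simp
qed

lemma g_t_le_traj_return:
  assumes "valid_policy A \<pi>"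
    and "\<forall>s\<in>states_bar S. \<mu> s \<ge> 0"
    and "\<forall>s\<in>states_bar S. \<forall>a\<in>actions A. \<forall>s'\<in>states_bar S. p s a s' \<ge> 0"
    and "\<beta> > 0"
    and ss: "ss \<in> state_seqs S t" and as: "as \<in> action_seqs A t"
    and pos: "traj_prob p \<mu> \<pi> t ss as > 0"
  shows "g_t S A p r \<mu> t \<pi> \<beta> \<le> traj_return r t ss as - ln (traj_prob p \<mu> \<pi> t ss as) / \<beta>"
proof -
  let ?F = "\<lambda>ss as. traj_prob p \<mu> \<pi> t ss as * exp (- \<beta> * traj_return r t ss as)"
  have F_nonneg: "?F ss' as' \<ge> 0" if "ss' \<in> state_seqs S t" "as' \<in> action_seqs A t" for ss' as'
    using traj_prob_nonneg[OF assms(1-3) that] by simp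
  have "?F ss as \<le> (\<Sum>as'\<in>action_seqs A t. ?F ss as')"
    by (intro member_le_sum as F_nonneg ss finite_action_seqs) simp
  also have "\<dots> \<le> (\<Sum>ss'\<in>state_seqs S t. \<Sum>as'\<in>action_seqs A t. ?F ss' as')"
    by (intro member_le_sum ss sum_nonneg F_nonneg finite_state_seqs) auto
  finally have "ln (?F ss as) \<le> ln (\<Sum>ss'\<in>state_seqs S t. \<Sum>as'\<in>action_seqs A t. ?F ss' as')"
    using pos by (intro ln_mono) simp_all
  moreover have "ln (?F ss as) = ln (traj_prob p \<mu> \<pi> t ss as) - \<beta> * traj_return r t ss as"
    using pos by (simp add: ln_mult)
  ultimately show ?thesis
    using \<open>\<beta> > 0\<close> by (simp add: g_t_def field_simps)
qed

lemma liminf_eq_MInfty_if_le_minus_real: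
  fixes f :: "nat \<Rightarrow> ereal"
  assumes "\<And>t. f t \<le> ereal (- real t)"
  shows "liminf f = -\<infinity>"
proof -
  have "liminf f \<le> liminf (\<lambda>t. ereal (- real t))"
    by (intro Liminf_mono always_eventually allI assms)
  also have "\<dots> = -\<infinity>"
    by (intro lim_imp_Liminf) (simp_all add: ereal_minus_real_tendsto_MInf)
  finally show ?thesis
    by simp
qed

definition leaky_p :: "nat \<Rightarrow> nat \<Rightarrow> nat \<Rightarrow> real" where
  "leaky_p s a s' =
     (if s = 1 then (if s' = 1 \<or> s' = 2 then 1/2 else 0) else (if s' = 2 then 1 else 0))"

definition leaky_r :: "nat \<Rightarrow> nat \<Rightarrow> nat \<Rightarrow> real" where
  "leaky_r s a s' = (if s = 1 \<and> s' = 1 then - (1 + ln 2) else 0)"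

definition leaky_\<mu> :: "nat \<Rightarrow> real" where
  "leaky_\<mu> s = (if s = 1 then 1 else 0)"

lemma states_bar_1: "states_bar (Suc 0) = {1, 2}"
  by (auto simp: states_bar_def)

lemma is_mdp_leaky: "is_mdp 1 1 leaky_p leaky_r leaky_\<mu>"
  by (simp add: is_mdp_def states_bar_1 states_def actions_def leaky_p_def leaky_r_def leaky_\<mu>_def)

lemma occ_leaky: "occ 1 leaky_p d 1 n 1 = (1/2) ^ n"
  by (induction n) (simp_all add: states_bar_1 leaky_p_def)

lemma transient_leaky: "transient 1 1 leaky_p"
  unfolding transient_def states_def using occ_leaky summable_geometric[of "1/2 :: real"] by simp

lemma g_t_leaky_le:
  assumes \<pi>: "valid_policy 1 \<pi>"
  shows "g_t 1 1 leaky_p leaky_r leaky_\<mu> t \<pi> 1 \<le> - real t"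
proof -
  define ss where "ss = replicate (t + 2) (1::nat)"
  define as where "as = replicate (t + 1) (0::nat)"
  have ss: "ss \<in> state_seqs 1 t"
    by (auto simp: ss_def state_seqs_def states_bar_def)
  have as: "as \<in> action_seqs 1 t"
    by (auto simp: as_def action_seqs_def actions_def)
  have ss_nth: "ss ! k = 1" if "k \<le> t + 1" for k
    unfolding ss_def using that by (intro nth_replicate) simp
  have as_nth: "as ! k = 0" if "k \<le> t" for k
    unfolding as_def using that by (intro nth_replicate) simp
  have \<pi>_0: "\<pi> ss' as' 0 = 1" for ss' as'
    using \<pi> by (simp add: valid_policy_def actions_def)
  have "(\<Prod>k\<le>t. \<pi> (take (Suc k) ss) (take k as) (as ! k) * leaky_p (ss ! k) (as ! k) (ss ! Suc k))
      = (\<Prod>k\<le>t. 1/2)"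
    by (rule prod.cong) (simp_all add: ss_nth as_nth \<pi>_0 leaky_p_def)
  then have prob: "traj_prob leaky_p leaky_\<mu> \<pi> t ss as = (1/2) ^ (t + 1)"
    by (simp add: traj_prob_def ss_nth leaky_\<mu>_def)
  have "(\<Sum>k\<le>t. leaky_r (ss ! k) (as ! k) (ss ! Suc k)) = (\<Sum>k\<le>t. - (1 + ln 2))"
    by (rule sum.cong) (simp_all add: ss_nth leaky_r_def)
  then have return: "traj_return leaky_r t ss as = - (real t + 1) * (1 + ln 2)"
    by (simp add: traj_return_def algebra_simps)
  have "g_t 1 1 leaky_p leaky_r leaky_\<mu> t \<pi> 1
      \<le> traj_return leaky_r t ss as - ln (traj_prob leaky_p leaky_\<mu> \<pi> t ss as) / 1"
    by (rule g_t_le_traj_return[OF \<pi> _ _ _ ss as])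
      (simp_all add: prob states_bar_1 actions_def leaky_\<mu>_def leaky_p_def)
  also have "\<dots> = - (real t + 1)"
    by (simp add: prob return ln_realpow ln_div algebra_simps)
  finally show ?thesis
    by simp
qed

lemma g_star_t_leaky_le: "g_star_t 1 1 leaky_p leaky_r leaky_\<mu> t 1 \<le> ereal (- real t)"
  unfolding g_star_t_def
proof (intro SUP_least)
  fix \<pi> assume "\<pi> \<in> {\<pi>. valid_policy 1 \<pi>}"
  then show "ereal (g_t 1 1 leaky_p leaky_r leaky_\<mu> t \<pi> 1) \<le> ereal (- real t)"
    using g_t_leaky_le by simp
qed

theorem proposition5:
  shows "\<exists>S A p r \<mu> \<beta>. is_mdp S A p r \<mu> \<and> transient S A p \<and> \<beta> > 0 \<and>
           g_star_inf S A p r \<mu> \<beta> = -\<infinity>"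
proof (intro exI conjI)
  show "is_mdp 1 1 leaky_p leaky_r leaky_\<mu>"
    by (rule is_mdp_leaky)
  show "transient 1 1 leaky_p"
    by (rule transient_leaky)
  show "g_star_inf 1 1 leaky_p leaky_r leaky_\<mu> 1 = -\<infinity>"
    unfolding g_star_inf_def by (intro liminf_eq_MInfty_if_le_minus_real g_star_t_leaky_le)
qed simp

end
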